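(* Let $q>1$. There is no $u\in C^{4}(\mathbb{R}^{2})$, $u>0$, solving $\Delta^{2}u+u^{-q}=0$ in $\mathbb{R}^{2}$ and satisfying $\lim_{|x|\to+\infty}(\ln|x|)^{1/q}u(x)=+\infty$. Consequently, there is no such solution with $\inf_{\mathbb{R}^{2}}u>0$. *)

theory Defs
  imports "HOL-Analysis.Analysis"
begin

text \<open>Functions on the plane are modelled as functions on real \<times> real
  (whose norm is the Euclidean norm).\<close>

definition pd1 :: "(real \<times> real \<Rightarrow> real) \<Rightarrow> real \<times> real \<Rightarrow> real" where
  "pd1 f = (\<lambda>(x, y). deriv (\<lambda>t. f (t, y)) x)"

definition pd2 :: "(real \<times> real \<Rightarrow> real) \<Rightarrow> real \<times> real \<Rightarrow> real" where
  "pd2 f = (\<lambda>(x, y). deriv (\<lambda>t. f (x, t)) y)"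

fun Ck :: "nat \<Rightarrow> (real \<times> real \<Rightarrow> real) \<Rightarrow> bool" where
  "Ck 0 f = continuous_on UNIV f"
| "Ck (Suc k) f =
     ((\<forall>x y. (\<lambda>t. f (t, y)) differentiable (at x)) \<and>
      (\<forall>x y. (\<lambda>t. f (x, t)) differentiable (at y)) \<and>
      Ck k (pd1 f) \<and> Ck k (pd2 f))"

definition laplacian :: "(real \<times> real \<Rightarrow> real) \<Rightarrow> real \<times> real \<Rightarrow> real" where
  "laplacian f = (\<lambda>p. pd1 (pd1 f) p + pd2 (pd2 f) p)"

end

theory Submission
  imports Defs "HOL-Real_Asymp.Real_Asymp"
begin

text \<open>No positive function u on the plane can have \<Delta>\<Delta>u < 0 everywhere. Let U, V, W be the angular integrals of u, \<Delta>u, \<Delta>\<Delta>u over the circle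
  of radius r. Polar coordinates give (r U')' = r V and (r V')' = r W with W < 0. As r V' vanishes
  at 0, it is negative and decreasing, so V \<le> V(1) - M ln r for some M > 0 and eventually
  V \<le> -1. Then r U' \<le> C - r^2/2, hence U \<le> G + C ln r - r^2/4, which becomes negative.\<close>

section \<open>Radial differential inequalities\<close>

lemma radial_superharmonic_tendsto_at_bot:
  fixes V V' W :: "real \<Rightarrow> real"
  assumes V': "\<And>r. r > 0 \<Longrightarrow> DERIV V r :> V' r"
    and flux': "\<And>r. r > 0 \<Longrightarrow> DERIV (\<lambda>s. s * V' s) r :> r * W r"
    and flux0: "isCont (\<lambda>s. s * V' s) 0"
    and W: "\<And>r. r > 0 \<Longrightarrow> W r < 0"
  shows "filterlim V at_bot at_top"
proof -
  have "continuous_on {0..1} (\<lambda>s. s * V' s)"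
  proof (intro continuous_at_imp_continuous_on ballI)
    fix s :: real assume "s \<in> {0..1}"
    then consider "s = 0" | "s > 0" by fastforce
    then show "isCont (\<lambda>s. s * V' s) s"
      using flux0 by cases (auto intro: DERIV_isCont flux')
  qed
  then obtain l z where z: "0 < z" "DERIV (\<lambda>s. s * V' s) z :> l" "1 * V' 1 - 0 * V' 0 = l"
    using MVT[of 0 1 "\<lambda>s. s * V' s"] flux' by (auto simp: real_differentiable_def)
  have "l = z * W z" using DERIV_unique[OF z(2) flux'[OF z(1)]] .
  then have "V' 1 < 0" using z W[OF z(1)] by (simp add: mult_pos_neg)
  define M where "M = - V' 1"
  have M: "M > 0" using \<open>V' 1 < 0\<close> by (simp add: M_def)
  have flux_le: "r * V' r \<le> - M" if "r \<ge> 1" for r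
  proof -
    have "r * V' r \<le> 1 * V' 1"
    proof (rule DERIV_nonpos_imp_nonincreasing[OF that])
      fix x :: real assume "1 \<le> x"
      then have "DERIV (\<lambda>s. s * V' s) x :> x * W x" "x * W x \<le> 0"
        using flux'[of x] W[of x] mult_pos_neg[of x "W x"] by auto
      then show "\<exists>y. DERIV (\<lambda>s. s * V' s) x :> y \<and> y \<le> 0" by blast
    qed
    then show ?thesis by (simp add: M_def)
  qed
  have V_le: "V r \<le> V 1 - M * ln r" if "r \<ge> 1" for r
  proof -
    have "V r + M * ln r \<le> V 1 + M * ln 1"
    proof (rule DERIV_nonpos_imp_nonincreasing[OF that])
      fix x :: real assume x: "1 \<le> x" "x \<le> r"
      have "DERIV (\<lambda>x. V x + M * ln x) x :> V' x + M / x"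
        using x by (auto intro!: derivative_eq_intros V')
      moreover have "V' x + M / x \<le> 0"
        using flux_le[OF x(1)] x by (simp add: field_simps)
      ultimately show "\<exists>y. DERIV (\<lambda>x. V x + M * ln x) x :> y \<and> y \<le> 0" by blast
    qed
    then show ?thesis by simp
  qed
  show ?thesis
    unfolding filterlim_at_bot
  proof
    fix c :: real
    have "eventually (\<lambda>r. V 1 - M * ln r \<le> c) at_top"
      using M by real_asymp
    with eventually_ge_at_top[of 1] show "eventually (\<lambda>r. V r \<le> c) at_top"
      by eventually_elim (use V_le in fastforce)
  qed
qed

lemma radial_laplacian_tendsto_at_bot:
  fixes U U' V :: "real \<Rightarrow> real"
  assumes U': "\<And>r. r > 0 \<Longrightarrow> DERIV U r :> U' r"
    and flux': "\<And>r. r > 0 \<Longrightarrow> DERIV (\<lambda>s. s * U' s) r :> r * V r"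
    and V: "filterlim V at_bot at_top"
  shows "filterlim U at_bot at_top"
proof -
  have "eventually (\<lambda>r. V r \<le> -1) at_top"
    using V by (simp add: filterlim_at_bot)
  then obtain R0 where R0: "\<And>r. r \<ge> R0 \<Longrightarrow> V r \<le> -1"
    by (auto simp: eventually_at_top_linorder)
  define R where "R = max 1 R0"
  have R: "R \<ge> 1" "\<And>r. r \<ge> R \<Longrightarrow> V r \<le> -1" using R0 by (auto simp: R_def)
  define C where "C = R * U' R + R\<^sup>2 / 2"
  have flux_le: "r * U' r \<le> C - r\<^sup>2 / 2" if "r \<ge> R" for r
  proof -
    have "r * U' r + r\<^sup>2 / 2 \<le> R * U' R + R\<^sup>2 / 2"
    proof (rule DERIV_nonpos_imp_nonincreasing[OF that])
      fix x :: real assume x: "R \<le> x" "x \<le> r"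
      have "DERIV (\<lambda>x. x\<^sup>2 / 2) x :> x" by (auto intro!: derivative_eq_intros)
      then have "DERIV (\<lambda>x. x * U' x + x\<^sup>2 / 2) x :> x * V x + x"
        using x R by (intro DERIV_add flux') auto
      moreover have "x * V x \<le> x * (-1)"
        using x R by (intro mult_left_mono) auto
      ultimately show "\<exists>y. DERIV (\<lambda>x. x * U' x + x\<^sup>2 / 2) x :> y \<and> y \<le> 0" by force
    qed
    then show ?thesis by (simp add: C_def)
  qed
  define G where "G = U R - C * ln R + R\<^sup>2 / 4"
  have U_le: "U r \<le> G + C * ln r - r\<^sup>2 / 4" if "r \<ge> R" for r
  proof -
    have "U r - C * ln r + r\<^sup>2 / 4 \<le> U R - C * ln R + R\<^sup>2 / 4"
    proof (rule DERIV_nonpos_imp_nonincreasing[OF that])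
      fix x :: real assume x: "R \<le> x" "x \<le> r"
      then have "x > 0" using R by simp
      then have "DERIV (\<lambda>x. U x - C * ln x + x\<^sup>2 / 4) x :> U' x - C / x + x / 2"
        by (auto intro!: derivative_eq_intros U' simp: field_simps)
      moreover have "U' x - C / x + x / 2 \<le> 0"
        using flux_le[OF x(1)] \<open>x > 0\<close> by (simp add: field_simps power2_eq_square)
      ultimately show "\<exists>y. DERIV (\<lambda>x. U x - C * ln x + x\<^sup>2 / 4) x :> y \<and> y \<le> 0" by blast
    qed
    then show ?thesis by (simp add: G_def)
  qed
  show ?thesis
    unfolding filterlim_at_bot
  proof
    fix c :: real
    have "eventually (\<lambda>r. G + C * ln r - r\<^sup>2 / 4 \<le> c) at_top"
      by real_asymp
    with eventually_ge_at_top[of R] show "eventually (\<lambda>r. U r \<le> c) at_top"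
      by eventually_elim (use U_le in fastforce)
  qed
qed

section \<open>Partial derivatives and the classes Ck\<close>

lemma has_derivative_of_partials:
  assumes d1: "\<forall>x y. (\<lambda>t. h (t, y)) differentiable (at x)"
    and d2: "\<forall>x y. (\<lambda>t. h (x, t)) differentiable (at y)"
    and c: "continuous_on UNIV (pd2 h)"
  shows "(h has_derivative (\<lambda>(a, b). a * pd1 h p + b * pd2 h p)) (at p)"
proof -
  obtain x y where p: "p = (x, y)" by (cases p)
  have fx: "((\<lambda>t. h (t, y)) has_derivative (\<lambda>a. a * pd1 h (x, y))) (at x within UNIV)"
    using d1 DERIV_deriv_iff_real_differentiable[of "\<lambda>t. h (t, y)" x]
    unfolding pd1_def has_field_derivative_def
    by (auto elim!: has_derivative_eq_rhs simp: fun_eq_iff)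
  have fy: "((\<lambda>t. h (x', t)) has_derivative blinfun_apply (blinfun_mult_right (pd2 h (x', y'))))
      (at y' within UNIV)" for x' y'
    using d2 DERIV_deriv_iff_real_differentiable[of "\<lambda>t. h (x', t)" y']
    unfolding pd2_def has_field_derivative_def
    by (auto elim!: has_derivative_eq_rhs simp: fun_eq_iff)
  have "continuous (at (x, y)) (\<lambda>z. blinfun_mult_right (pd2 h z))"
    using c by (intro continuous_intros) (simp add: continuous_on_eq_continuous_at)
  then have cy: "continuous (at (x, y) within UNIV \<times> UNIV)
      (\<lambda>(x', y'). blinfun_mult_right (pd2 h (x', y')))"
    by (simp add: split_beta')
  have "((\<lambda>(x, y). h (x, y)) has_derivative
      (\<lambda>(tx, ty). tx * pd1 h (x, y) + blinfun_mult_right (pd2 h (x, y)) ty)) (at (x, y) within UNIV \<times> UNIV)"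
    by (rule has_derivative_partialsI[OF fx fy cy]) auto
  then show ?thesis by (simp add: p split_beta' mult.commute)
qed

lemma Ck_continuous_on: "Ck k f \<Longrightarrow> continuous_on UNIV f"
proof (induction k arbitrary: f)
  case 0
  then show ?case by simp
next
  case (Suc k)
  then have "continuous_on UNIV (pd2 f)" by simp
  then have "(f has_derivative (\<lambda>(a, b). a * pd1 f p + b * pd2 f p)) (at p)" for p
    using Suc.prems by (intro has_derivative_of_partials) auto
  then show ?case
    by (intro continuous_at_imp_continuous_on ballI has_derivative_continuous)
qed

lemma Ck_Suc_has_derivative:
  "Ck (Suc k) h \<Longrightarrow> (h has_derivative (\<lambda>(a, b). a * pd1 h p + b * pd2 h p)) (at p)"
  using Ck_continuous_on[of k "pd2 h"] by (intro has_derivative_of_partials) simp_all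

lemma Ck_Suc_imp_Ck: "Ck (Suc k) f \<Longrightarrow> Ck k f"
proof (induction k arbitrary: f)
  case 0
  then show ?case using Ck_continuous_on[OF 0] by simp
next
  case (Suc k)
  then have "Ck k (pd1 f)" "Ck k (pd2 f)"
    by (simp_all only: Ck.simps(2)[of "Suc k" f] simp_thms)
  with Suc.prems show ?case
    by (simp only: Ck.simps(2)[of k f] Ck.simps(2)[of "Suc k" f] simp_thms)
qed

lemma Ck_Suc_has_real_derivative_comp:
  assumes h: "Ck (Suc k) h"
    and a: "(a has_real_derivative a') (at s within S)"
    and b: "(b has_real_derivative b') (at s within S)"
  shows "((\<lambda>s. h (a s, b s)) has_real_derivative
           a' * pd1 h (a s, b s) + b' * pd2 h (a s, b s)) (at s within S)"
proof -
  have "((\<lambda>s. (a s, b s)) has_derivative (\<lambda>x. (a' * x, b' * x))) (at s within S)"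
    using a b unfolding has_field_derivative_def by (intro has_derivative_Pair)
  from has_derivative_compose[OF this Ck_Suc_has_derivative[OF h]]
  show ?thesis unfolding has_field_derivative_def
    by (rule has_derivative_eq_rhs) (simp add: fun_eq_iff algebra_simps)
qed

lemma pd1_add:
  assumes "\<forall>x y. (\<lambda>t. f (t, y)) differentiable (at x)" "\<forall>x y. (\<lambda>t. g (t, y)) differentiable (at x)"
  shows "pd1 (\<lambda>p. f p + g p) = (\<lambda>p. pd1 f p + pd1 g p)"
proof
  fix p :: "real \<times> real"
  obtain a b where p: "p = (a, b)" by (cases p)
  have "DERIV (\<lambda>t. f (t, b) + g (t, b)) a :> pd1 f p + pd1 g p"
    using assms unfolding p pd1_def
    by (auto intro!: DERIV_add simp: DERIV_deriv_iff_real_differentiable)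
  then show "pd1 (\<lambda>p. f p + g p) p = pd1 f p + pd1 g p"
    unfolding p pd1_def by (simp add: DERIV_imp_deriv)
qed

lemma pd2_add:
  assumes "\<forall>x y. (\<lambda>t. f (x, t)) differentiable (at y)" "\<forall>x y. (\<lambda>t. g (x, t)) differentiable (at y)"
  shows "pd2 (\<lambda>p. f p + g p) = (\<lambda>p. pd2 f p + pd2 g p)"
proof
  fix p :: "real \<times> real"
  obtain a b where p: "p = (a, b)" by (cases p)
  have "DERIV (\<lambda>t. f (a, t) + g (a, t)) b :> pd2 f p + pd2 g p"
    using assms unfolding p pd2_def
    by (auto intro!: DERIV_add simp: DERIV_deriv_iff_real_differentiable)
  then show "pd2 (\<lambda>p. f p + g p) p = pd2 f p + pd2 g p"
    unfolding p pd2_def by (simp add: DERIV_imp_deriv)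
qed

lemma Ck_add: "Ck k f \<Longrightarrow> Ck k g \<Longrightarrow> Ck k (\<lambda>p. f p + g p)"
proof (induction k arbitrary: f g)
  case 0
  then show ?case by (simp add: continuous_on_add)
next
  case (Suc k)
  then show ?case
    by (simp add: pd1_add pd2_add)
qed

lemma Ck_laplacian: "Ck (Suc (Suc k)) f \<Longrightarrow> Ck k (laplacian f)"
  unfolding laplacian_def by (intro Ck_add) simp_all

section \<open>Integrals over circles\<close>

lemma continuous_on_polar_comp:
  fixes h :: "real \<times> real \<Rightarrow> 'a::topological_space"
  shows "continuous_on UNIV h \<Longrightarrow>
    continuous_on S (\<lambda>x. h (fst x * cos (snd x), fst x * sin (snd x)))"
  by (erule continuous_on_compose2) (intro continuous_intros, auto)

lemma continuous_on_circle_comp: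
  fixes h :: "real \<times> real \<Rightarrow> 'a::topological_space"
  shows "continuous_on UNIV h \<Longrightarrow> continuous_on S (\<lambda>t. h (r * cos t, r * sin t))"
  by (erule continuous_on_compose2) (intro continuous_intros, auto)

definition circle_integral :: "(real \<times> real \<Rightarrow> real) \<Rightarrow> real \<Rightarrow> real" where
  "circle_integral g r = integral {0..2*pi} (\<lambda>t. g (r * cos t, r * sin t))"

definition radial_deriv :: "(real \<times> real \<Rightarrow> real) \<Rightarrow> real \<Rightarrow> real \<Rightarrow> real" where
  "radial_deriv g r t = cos t * pd1 g (r * cos t, r * sin t) + sin t * pd2 g (r * cos t, r * sin t)"

definition radial_deriv2 :: "(real \<times> real \<Rightarrow> real) \<Rightarrow> real \<Rightarrow> real \<Rightarrow> real" where
  "radial_deriv2 g r t =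
     cos t * (cos t * pd1 (pd1 g) (r * cos t, r * sin t) + sin t * pd2 (pd1 g) (r * cos t, r * sin t))
   + sin t * (cos t * pd1 (pd2 g) (r * cos t, r * sin t) + sin t * pd2 (pd2 g) (r * cos t, r * sin t))"

lemma continuous_on_radial_deriv:
  "Ck (Suc k) g \<Longrightarrow> continuous_on S (\<lambda>(r, t). radial_deriv g r t)"
  unfolding radial_deriv_def split_beta
  by (intro continuous_intros continuous_on_polar_comp Ck_continuous_on) auto

lemma continuous_on_radial_deriv_circle:
  "Ck (Suc k) g \<Longrightarrow> continuous_on S (radial_deriv g r)"
  unfolding radial_deriv_def
  by (intro continuous_intros continuous_on_circle_comp Ck_continuous_on) auto

lemma continuous_on_radial_deriv2:
  "Ck (Suc (Suc k)) g \<Longrightarrow> continuous_on S (\<lambda>(r, t). radial_deriv2 g r t)"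
  unfolding radial_deriv2_def split_beta
  by (intro continuous_intros continuous_on_polar_comp Ck_continuous_on) auto

lemma continuous_on_radial_deriv2_circle:
  "Ck (Suc (Suc k)) g \<Longrightarrow> continuous_on S (radial_deriv2 g r)"
  unfolding radial_deriv2_def
  by (intro continuous_intros continuous_on_circle_comp Ck_continuous_on) auto

lemma has_real_derivative_radial:
  assumes "Ck (Suc k) g"
  shows "((\<lambda>r. g (r * cos t, r * sin t)) has_real_derivative radial_deriv g r t) (at r within S)"
proof -
  have "((\<lambda>r. r * cos t) has_real_derivative cos t) (at r within S)"
    and "((\<lambda>r. r * sin t) has_real_derivative sin t) (at r within S)"
    by (auto intro!: derivative_eq_intros)
  from Ck_Suc_has_real_derivative_comp[OF assms this] show ?thesis
    by (simp add: radial_deriv_def)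
qed

lemma circle_integral_has_derivative:
  assumes g: "Ck (Suc k) g"
  shows "(circle_integral g has_real_derivative integral {0..2*pi} (radial_deriv g r)) (at r)"
proof -
  have "((\<lambda>r. integral (cbox 0 (2*pi)) (\<lambda>t. g (r * cos t, r * sin t))) has_real_derivative
        integral (cbox 0 (2*pi)) (radial_deriv g r)) (at r within UNIV)"
  proof (rule leibniz_rule_field_derivative)
    show "(\<lambda>t. g (x * cos t, x * sin t)) integrable_on cbox 0 (2 * pi)" for x
      using g by (intro integrable_continuous continuous_on_circle_comp Ck_continuous_on)
  qed (auto intro: has_real_derivative_radial[OF g] continuous_on_radial_deriv[OF g])
  then show ?thesis unfolding circle_integral_def[abs_def] by simp
qed

lemma has_real_derivative_radial_deriv:
  assumes "Ck (Suc (Suc k)) g"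
  shows "((\<lambda>r. radial_deriv g r t) has_real_derivative radial_deriv2 g r t) (at r within S)"
proof -
  have g1: "Ck (Suc k) (pd1 g)" "Ck (Suc k) (pd2 g)" using assms by simp_all
  show ?thesis
    unfolding radial_deriv_def[abs_def] radial_deriv2_def
    by (intro DERIV_add DERIV_cmult has_real_derivative_radial[OF g1(1), unfolded radial_deriv_def]
        has_real_derivative_radial[OF g1(2), unfolded radial_deriv_def])
qed

lemma circle_flux_has_derivative:
  assumes g: "Ck (Suc (Suc k)) g"
  shows "((\<lambda>s. s * integral {0..2*pi} (radial_deriv g s)) has_real_derivative
          integral {0..2*pi} (\<lambda>t. radial_deriv g r t + r * radial_deriv2 g r t)) (at r)"
proof -
  have g1: "Ck (Suc k) g" using g by (rule Ck_Suc_imp_Ck)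
  have "((\<lambda>s. integral (cbox 0 (2*pi)) (\<lambda>t. s * radial_deriv g s t)) has_real_derivative
        integral (cbox 0 (2*pi)) (\<lambda>t. radial_deriv g r t + r * radial_deriv2 g r t)) (at r within UNIV)"
  proof (rule leibniz_rule_field_derivative)
    show "((\<lambda>s. s * radial_deriv g s t) has_real_derivative radial_deriv g x t + x * radial_deriv2 g x t)
        (at x within UNIV)" for x t
      using has_real_derivative_radial_deriv[OF g] by (auto intro!: derivative_eq_intros)
    show "(\<lambda>t. x * radial_deriv g x t) integrable_on cbox 0 (2 * pi)" for x
      by (intro integrable_continuous continuous_intros continuous_on_radial_deriv_circle[OF g1])
    have "continuous_on (UNIV \<times> cbox 0 (2 * pi))
        (\<lambda>x. radial_deriv g (fst x) (snd x) + fst x * radial_deriv2 g (fst x) (snd x))"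
      using continuous_on_radial_deriv[OF g1] continuous_on_radial_deriv2[OF g]
      unfolding split_beta by (intro continuous_intros) auto
    then show "continuous_on (UNIV \<times> cbox 0 (2 * pi))
        (\<lambda>(x, t). radial_deriv g x t + x * radial_deriv2 g x t)"
      by (simp add: split_beta)
  qed auto
  then show ?thesis by simp
qed

text \<open>The polar form r^2 \<Delta>g = r d/dr (r dg/dr) + d^2g/dt^2 at (r cos t, r sin t), written with
  s = sin t, c = cos t, the first partials X, Y and the second partials A, B, C, D of g.\<close>
lemma polar_laplacian_identity:
  fixes r s c X Y A B C D :: real
  assumes "s\<^sup>2 + c\<^sup>2 = 1"
  shows "r * ((c * X + s * Y) + r * (c * (c * A + s * B) + s * (c * C + s * D)))
     + (- r * c * X - r * s * (- r * s * A + r * c * B) - r * s * Y + r * c * (- r * s * C + r * c * D))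
     = r\<^sup>2 * (A + D)"
  using assms by algebra

lemma circle_flux_derivative_eq:
  assumes g: "Ck (Suc (Suc k)) g"
  shows "r * integral {0..2*pi} (\<lambda>t. radial_deriv g r t + r * radial_deriv2 g r t)
       = r\<^sup>2 * circle_integral (laplacian g) r"
proof -
  have g1: "Ck (Suc k) g" using g by (rule Ck_Suc_imp_Ck)
  have g2: "Ck (Suc k) (pd1 g)" "Ck (Suc k) (pd2 g)" using g by simp_all
  (* w t is d/dt g (r cos t, r sin t); its derivative w' is the angular part of the polar
     Laplacian, which integrates to zero by periodicity. *)
  define w where "w t = - r * sin t * pd1 g (r * cos t, r * sin t)
     + r * cos t * pd2 g (r * cos t, r * sin t)" for t
  define w' where "w' t = - r * cos t * pd1 g (r * cos t, r * sin t)
     - r * sin t * (- r * sin t * pd1 (pd1 g) (r * cos t, r * sin t)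
                    + r * cos t * pd2 (pd1 g) (r * cos t, r * sin t))
     - r * sin t * pd2 g (r * cos t, r * sin t)
     + r * cos t * (- r * sin t * pd1 (pd2 g) (r * cos t, r * sin t)
                    + r * cos t * pd2 (pd2 g) (r * cos t, r * sin t))" for t
  have "(w has_real_derivative w' t) (at t)" for t
  proof -
    have cos': "((\<lambda>t. r * cos t) has_real_derivative - r * sin t) (at t)"
      and sin': "((\<lambda>t. r * sin t) has_real_derivative r * cos t) (at t)"
      and minus_sin': "((\<lambda>t. - r * sin t) has_real_derivative - r * cos t) (at t)"
      by (auto intro!: derivative_eq_intros)
    note d1 = Ck_Suc_has_real_derivative_comp[OF g2(1) cos' sin']
      and d2 = Ck_Suc_has_real_derivative_comp[OF g2(2) cos' sin']
    from DERIV_add[OF DERIV_mult'[OF minus_sin' d1] DERIV_mult'[OF cos' d2]]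
    show ?thesis unfolding w_def[abs_def] by (rule DERIV_cong) (simp add: w'_def algebra_simps)
  qed
  then have "(w' has_integral (w (2*pi) - w 0)) {0..2*pi}"
    by (intro fundamental_theorem_of_calculus)
      (auto simp: has_real_derivative_iff_has_vector_derivative[symmetric] intro: has_field_derivative_at_within)
  then have angular: "(w' has_integral 0) {0..2*pi}" by (simp add: w_def)
  define F where "F = (\<lambda>t. radial_deriv g r t + r * radial_deriv2 g r t)"
  have "continuous_on {0..2*pi} F"
    unfolding F_def using continuous_on_radial_deriv_circle[OF g1] continuous_on_radial_deriv2_circle[OF g]
    by (intro continuous_intros) auto
  then have "((\<lambda>t. r * F t) has_integral r * integral {0..2*pi} F) {0..2*pi}"
    by (intro has_integral_mult_right integrable_integral integrable_continuous_real)
  from has_integral_add[OF this angular]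
  have "((\<lambda>t. r * F t + w' t) has_integral r * integral {0..2*pi} F) {0..2*pi}" by simp
  moreover have "r * F t + w' t = r\<^sup>2 * laplacian g (r * cos t, r * sin t)" for t
    unfolding F_def w'_def radial_deriv_def radial_deriv2_def laplacian_def
    by (rule polar_laplacian_identity) simp
  ultimately have "((\<lambda>t. r\<^sup>2 * laplacian g (r * cos t, r * sin t)) has_integral r * integral {0..2*pi} F) {0..2*pi}"
    by simp
  then have "r * integral {0..2*pi} F = integral {0..2*pi} (\<lambda>t. r\<^sup>2 * laplacian g (r * cos t, r * sin t))"
    by (rule integral_unique[symmetric])
  also have "\<dots> = r\<^sup>2 * circle_integral (laplacian g) r"
    unfolding circle_integral_def by (rule integral_mult_right)
  finally show ?thesis unfolding F_def .
qed

lemma circle_flux_has_derivative_laplacian: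
  assumes "Ck (Suc (Suc k)) g" "r \<noteq> 0"
  shows "((\<lambda>s. s * integral {0..2*pi} (radial_deriv g s)) has_real_derivative
          r * circle_integral (laplacian g) r) (at r)"
proof -
  have "integral {0..2*pi} (\<lambda>t. radial_deriv g r t + r * radial_deriv2 g r t)
      = r * circle_integral (laplacian g) r"
    using circle_flux_derivative_eq[OF assms(1), of r] assms(2) by (simp add: power2_eq_square)
  with circle_flux_has_derivative[OF assms(1), of r] show ?thesis by simp
qed

lemma integral_pos_continuous:
  fixes f :: "real \<Rightarrow> real"
  assumes "continuous_on {a..b} f" "a < b" "\<And>x. x \<in> {a..b} \<Longrightarrow> f x > 0"
  shows "integral {a..b} f > 0"
proof -
  obtain x where x: "x \<in> {a..b}" "\<And>y. y \<in> {a..b} \<Longrightarrow> f x \<le> f y"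
    using continuous_attains_inf[OF compact_Icc _ assms(1)] assms(2) by auto
  have "0 < (b - a) * f x" using assms(2,3) x(1) by simp
  also have "\<dots> = integral {a..b} (\<lambda>_. f x)" using assms(2) by simp
  also have "\<dots> \<le> integral {a..b} f"
    using x assms(1) by (intro integral_le integrable_continuous_real) auto
  finally show ?thesis .
qed

lemma circle_integral_pos:
  fixes g :: "real \<times> real \<Rightarrow> real"
  assumes "continuous_on UNIV g" "\<And>x. g x > 0"
  shows "circle_integral g r > 0"
  unfolding circle_integral_def
  using assms by (intro integral_pos_continuous continuous_on_circle_comp) auto

lemma circle_integral_neg:
  fixes g :: "real \<times> real \<Rightarrow> real"
  assumes "continuous_on UNIV g" "\<And>x. g x < 0"
  shows "circle_integral g r < 0"
proof -
  have "circle_integral (\<lambda>x. - g x) r > 0"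
    using assms by (intro circle_integral_pos continuous_intros) auto
  then show ?thesis by (simp add: circle_integral_def)
qed

lemma no_positive_bisuperharmonic:
  fixes u :: "real \<times> real \<Rightarrow> real"
  assumes u: "Ck 4 u" and pos: "\<And>x. u x > 0" and neg: "\<And>x. laplacian (laplacian u) x < 0"
  shows False
proof -
  have u4: "Ck (Suc (Suc (Suc (Suc 0)))) u"
    using u by (simp add: numeral_eq_Suc del: Ck.simps)
  define v where "v = laplacian u"
  have v: "Ck (Suc (Suc 0)) v" unfolding v_def by (rule Ck_laplacian[OF u4])
  have "filterlim (circle_integral v) at_bot at_top"
  proof (rule radial_superharmonic_tendsto_at_bot)
    show "DERIV (circle_integral v) r :> integral {0..2*pi} (radial_deriv v r)" for r
      by (rule circle_integral_has_derivative[OF v])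
    show "DERIV (\<lambda>s. s * integral {0..2*pi} (radial_deriv v s)) r :> r * circle_integral (laplacian v) r"
      if "r > 0" for r
      using that by (intro circle_flux_has_derivative_laplacian[OF v]) simp
    show "isCont (\<lambda>s. s * integral {0..2*pi} (radial_deriv v s)) 0"
      by (rule DERIV_isCont[OF circle_flux_has_derivative[OF v]])
    show "circle_integral (laplacian v) r < 0" for r
      using Ck_continuous_on[OF Ck_laplacian[OF v]] neg unfolding v_def
      by (rule circle_integral_neg)
  qed
  then have "filterlim (circle_integral u) at_bot at_top"
  proof (rule radial_laplacian_tendsto_at_bot[rotated 2])
    show "DERIV (circle_integral u) r :> integral {0..2*pi} (radial_deriv u r)" for r
      by (rule circle_integral_has_derivative[OF u4])
    show "DERIV (\<lambda>s. s * integral {0..2*pi} (radial_deriv u s)) r :> r * circle_integral v r"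
      if "r > 0" for r
      using that unfolding v_def by (intro circle_flux_has_derivative_laplacian[OF u4]) simp
  qed
  then have "eventually (\<lambda>r. circle_integral u r \<le> -1) at_top"
    by (simp add: filterlim_at_bot)
  then obtain r where "circle_integral u r \<le> -1"
    by (auto simp: eventually_at_top_linorder)
  then show False using circle_integral_pos[OF Ck_continuous_on[OF u] pos, of r] by simp
qed

theorem mainTheorem17:
  fixes q :: real
  assumes "q > 1"
  shows "\<not> (\<exists>u :: real \<times> real \<Rightarrow> real. Ck 4 u \<and> (\<forall>x. u x > 0) \<and>
              (\<forall>x. laplacian (laplacian u) x + u x powr (- q) = 0) \<and>
              filterlim (\<lambda>x. ln (norm x) powr (1 / q) * u x) at_top at_infinity)
       \<and> \<not> (\<exists>u :: real \<times> real \<Rightarrow> real. Ck 4 u \<and> (\<forall>x. u x > 0) \<and>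
              (\<forall>x. laplacian (laplacian u) x + u x powr (- q) = 0) \<and>
              (INF x. u x) > 0)"
proof -
  have "laplacian (laplacian u) x < 0"
    if "\<forall>x. u x > 0" "\<forall>x. laplacian (laplacian u) x + u x powr (- q) = 0" for u x
  proof -
    have "u x powr (- q) > 0" using that(1)[rule_format, of x] by simp
    then show ?thesis using that(2)[rule_format, of x] by linarith
  qed
  then show ?thesis using no_positive_bisuperharmonic by blast
qed

end
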